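(* An even nonnegative integer $n$ satisfies $v(n)=0$ if and only if $n=2^t-2$ or $n=2^t$ for some positive integer $t$.
   Context: A hyperbinary expansion of a nonnegative integer $n$ is a word $x_0\cdots x_k$ over $\{0,1,2\}$ with $x_0\ne0$ and $\sum_i x_i2^{k-i}=n$. The empty word is the unique hyperbinary expansion of $0$. Write $\mathcal H(n)$ for the set of such expansions and $b(n)=|\mathcal H(n)|$. $A(n)$ is the directed graph on $\mathcal H(n)$ with an arc from $\mathbf x02\mathbf y$ to $\mathbf x10\mathbf y$, from $2\mathbf y$ to $10\mathbf y$, and from $\mathbf x12\mathbf y$ to $\mathbf x20\mathbf y$, for arbitrary words $\mathbf x,\mathbf y$ whenever both endpoints lie in $\mathcal H(n)$. $A(n)$ is connected. $v(n)$ denotes the cyclomatic number of $A(n)$: (number of arcs) $-\,b(n)+1$. *)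

theory Defs
  imports Main
begin

text \<open>Value of a word x_0 ... x_k (most significant digit first): sum x_i 2^(k-i).\<close>
definition hval :: "nat list \<Rightarrow> nat" where
  "hval xs = foldl (\<lambda>a d. 2 * a + d) 0 xs"

definition hyperbinary :: "nat \<Rightarrow> nat list set" where
  "hyperbinary n = {xs. set xs \<subseteq> {0, 1, 2} \<and> (xs \<noteq> [] \<longrightarrow> hd xs \<noteq> 0) \<and> hval xs = n}"

definition b :: "nat \<Rightarrow> nat" where
  "b n = card (hyperbinary n)"

definition hmove :: "nat list \<Rightarrow> nat list \<Rightarrow> bool" where
  "hmove u w \<longleftrightarrow>
     (\<exists>x y. u = x @ [0, 2] @ y \<and> w = x @ [1, 0] @ y) \<or>
     (\<exists>y. u = 2 # y \<and> w = [1, 0] @ y) \<or>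
     (\<exists>x y. u = x @ [1, 2] @ y \<and> w = x @ [2, 0] @ y)"

definition arcsA :: "nat \<Rightarrow> (nat list \<times> nat list) set" where
  "arcsA n = {(u, w). u \<in> hyperbinary n \<and> w \<in> hyperbinary n \<and> hmove u w}"

definition v :: "nat \<Rightarrow> int" where
  "v n = int (card (arcsA n)) - int (b n) + 1"

end

theory Submission imports Defs begin

text \<open>
Arcs preserve the value of a word, every expansion containing a digit 2 has an out-arc, and
the binary expansion (the unique one without a 2) has none. Hence A(n) has at least b(n) - 1
arcs, with equality, i.e. v(n) = 0, exactly when no expansion of n has two distinct out-arcs.

Arcs of a word extend to arcs of the word with a digit appended; the only other arcs of
x @ [2] are the ones rewriting its last two digits. An expansion of n = 2m ends in 0 or 2, so
a branching expansion of 2m comes from a branching expansion of m or of m - 1, or from an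
expansion of (m - 1) div 2 that contains a 2 (followed by a digit e < 2 and the final 2);
conversely the last situation always produces branching. Finally, k has an expansion
containing a 2 iff k + 1 is not a power of 2. Thus v(2m) = 0 with m > 0 forces
(m - 1) div 2 = 2^j - 1, i.e. 2m \<in> {2^(j+2) - 2, 2^(j+2)}, and the converse follows by
induction on t, treating 2^t - 2 and 2^t simultaneously.
\<close>

lemma foldl_hval: "foldl (\<lambda>a d. 2 * a + d) a ys = a * 2 ^ length ys + hval ys"
proof (induction ys arbitrary: a)
  case Nil then show ?case by (simp add: hval_def)
next
  case (Cons y ys)
  have "hval (y # ys) = y * 2 ^ length ys + hval ys"
    using Cons.IH[of y] by (simp add: hval_def)
  then show ?case using Cons.IH[of "2 * a + y"] by (simp add: algebra_simps)
qed

lemma hval_append: "hval (xs @ ys) = hval xs * 2 ^ length ys + hval ys"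
  unfolding hval_def foldl_append by (fold hval_def) (rule foldl_hval)

lemma hval_Nil [simp]: "hval [] = 0"
  by (simp add: hval_def)

lemma hval_single [simp]: "hval [d] = d"
  by (simp add: hval_def)

lemma hval_snoc [simp]: "hval (xs @ [d]) = 2 * hval xs + d"
  using hval_append[of xs "[d]"] by simp

lemma hval_Cons: "hval (d # ys) = d * 2 ^ length ys + hval ys"
  using hval_append[of "[d]" ys] by simp

definition hyperbinary_word :: "nat list \<Rightarrow> bool" where
  "hyperbinary_word xs \<longleftrightarrow> set xs \<subseteq> {0, 1, 2} \<and> (xs \<noteq> [] \<longrightarrow> hd xs \<noteq> 0)"

lemma hyperbinary_eq: "hyperbinary n = {xs. hyperbinary_word xs \<and> hval xs = n}"
  by (auto simp: hyperbinary_def hyperbinary_word_def)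

lemma hyperbinary_word_snoc:
  "hyperbinary_word (x @ [d]) \<longleftrightarrow> d \<in> {0, 1, 2} \<and> (x = [] \<longrightarrow> d \<noteq> 0) \<and> hyperbinary_word x"
  by (cases x) (auto simp: hyperbinary_word_def)

lemma length_le_hval: "hyperbinary_word xs \<Longrightarrow> length xs \<le> hval xs"
proof (induction xs rule: rev_induct)
  case (snoc d x)
  show ?case
  proof (cases "x = []")
    case False
    have "length x \<le> hval x"
      using snoc by (simp add: hyperbinary_word_snoc)
    moreover have "1 \<le> length x" using False by (cases x) auto
    ultimately show ?thesis by simp
  qed (use snoc.prems in \<open>auto simp: hyperbinary_word_def\<close>)
qed simp

lemma finite_hyperbinary: "finite (hyperbinary n)"
proof (rule finite_subset)
  show "hyperbinary n \<subseteq> {xs. set xs \<subseteq> {0, 1, 2} \<and> length xs \<le> n}"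
    using length_le_hval by (auto simp: hyperbinary_eq hyperbinary_word_def)
  show "finite {xs. set xs \<subseteq> {0::nat, 1, 2} \<and> length xs \<le> n}"
    by (rule finite_lists_length_le) simp
qed

lemma hyperbinary_0_iff: "xs \<in> hyperbinary 0 \<longleftrightarrow> xs = []"
  using length_le_hval[of xs] by (auto simp: hyperbinary_eq hyperbinary_word_def)

lemma snoc_in_hyperbinary:
  "x \<in> hyperbinary m \<Longrightarrow> d \<in> {0, 1, 2} \<Longrightarrow> (x = [] \<longrightarrow> d \<noteq> 0) \<Longrightarrow> x @ [d] \<in> hyperbinary (2 * m + d)"
  by (auto simp: hyperbinary_eq hyperbinary_word_snoc)

lemma hyperbinary_snocE:
  assumes "u \<in> hyperbinary n" "n > 0"
  obtains x d where "u = x @ [d]" "d \<in> {0, 1, 2}" "x \<in> hyperbinary (hval x)" "n = 2 * hval x + d"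
  using assms by (cases u rule: rev_exhaust) (auto simp: hyperbinary_eq hyperbinary_word_snoc)

lemma binary_expansion_unique:
  assumes "x \<in> hyperbinary n" "y \<in> hyperbinary n" "2 \<notin> set x" "2 \<notin> set y"
  shows "x = y"
  using assms
proof (induction x arbitrary: n y rule: rev_induct)
  case Nil
  then have "n = 0" by (simp add: hyperbinary_def)
  with Nil.prems(2) show ?case by (simp add: hyperbinary_0_iff)
next
  case (snoc d x)
  have "n > 0"
  proof (rule ccontr)
    assume "\<not> n > 0"
    then have "x @ [d] \<in> hyperbinary 0" using snoc.prems(1) by simp
    then show False by (simp add: hyperbinary_0_iff)
  qed
  then obtain y' e where y: "y = y' @ [e]" "y' \<in> hyperbinary (hval y')" "n = 2 * hval y' + e"
    using hyperbinary_snocE[OF snoc.prems(2)] by blast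
  have "hyperbinary_word (x @ [d])" "hval (x @ [d]) = n"
    using snoc.prems(1) by (simp_all add: hyperbinary_eq)
  then have x: "x \<in> hyperbinary (hval x)" "n = 2 * hval x + d"
    by (simp_all add: hyperbinary_eq hyperbinary_word_snoc)
  have "d \<in> {0, 1}" "e \<in> {0, 1}"
    using snoc.prems y(1) by (auto simp: hyperbinary_eq hyperbinary_word_def)
  with x(2) y(3) have "d = e"
    by (auto; presburger)
  with x(2) y(3) have "hval x = hval y'"
    by simp
  then show ?case
    using snoc.IH[of "hval x" y'] x(1) y(1,2) snoc.prems(3,4) \<open>d = e\<close> by simp
qed

lemma binary_expansion_exists: "\<exists>x \<in> hyperbinary n. 2 \<notin> set x"
proof (induction n rule: less_induct)
  case (less n)
  show ?case
  proof (cases "n = 0")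
    case True then show ?thesis by (auto simp: hyperbinary_0_iff)
  next
    case False
    then obtain x where x: "x \<in> hyperbinary (n div 2)" "2 \<notin> set x"
      using less[of "n div 2"] by auto
    have "x = [] \<longrightarrow> n div 2 = 0"
      using x(1) by (auto simp: hyperbinary_eq)
    then have "x = [] \<longrightarrow> n mod 2 \<noteq> 0"
      using False by auto
    then have "x @ [n mod 2] \<in> hyperbinary (2 * (n div 2) + n mod 2)"
      by (intro snoc_in_hyperbinary[OF x(1)]) auto
    then have "x @ [n mod 2] \<in> hyperbinary n" by simp
    moreover have "2 \<notin> set (x @ [n mod 2])" using x(2) by auto
    ultimately show ?thesis by blast
  qed
qed

lemma hmove_two_in_set: "hmove u w \<Longrightarrow> 2 \<in> set u"
  by (auto simp: hmove_def)

lemma hmove_hval: "hmove u w \<Longrightarrow> hval w = hval u"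
  by (auto simp: hmove_def hval_append hval_Cons)

lemma hmove_hyperbinary_word: "hmove u w \<Longrightarrow> hyperbinary_word u \<Longrightarrow> hyperbinary_word w"
  by (auto simp: hmove_def hyperbinary_word_def hd_append split: if_splits)

lemma hmove_snoc: "hmove x w \<Longrightarrow> hmove (x @ [d]) (w @ [d])"
  unfolding hmove_def by (elim disjE exE) (metis append.assoc append_Cons)+

lemma hmove_02_end: "hmove (x @ [0, 2]) (x @ [1, 0])"
  unfolding hmove_def by (metis append_Nil2)

lemma hmove_12_end: "hmove (x @ [1, 2]) (x @ [2, 0])"
  unfolding hmove_def by (metis append_Nil2)

lemma hmove_exists: "set u \<subseteq> {0, 1, 2} \<Longrightarrow> 2 \<in> set u \<Longrightarrow> \<exists>w. hmove u w"
proof (induction u rule: rev_induct)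
  case (snoc d x)
  show ?case
  proof (cases "2 \<in> set x")
    case True
    then show ?thesis using snoc hmove_snoc by auto
  next
    case False
    then have "d = 2" using snoc.prems by auto
    then show ?thesis
    proof (cases x rule: rev_exhaust)
      case Nil then show ?thesis using \<open>d = 2\<close> by (auto simp: hmove_def)
    next
      case (snoc x' e)
      then have "e = 0 \<or> e = 1" using False \<open>set (x @ [d]) \<subseteq> {0, 1, 2}\<close> by auto
      then show ?thesis using \<open>d = 2\<close> snoc hmove_02_end hmove_12_end by auto
    qed
  qed
qed simp

lemma hmove_snocD:
  assumes "hmove (x @ [d]) w"
  shows "(\<exists>w'. w = w' @ [d] \<and> hmove x w') \<or>
    (d = 2 \<and> (x = [] \<and> w = [1, 0] \<or> (\<exists>x'. x = x' @ [0] \<and> w = x' @ [1, 0]) \<or>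
                (\<exists>x'. x = x' @ [1] \<and> w = x' @ [2, 0])))"
  using assms[unfolded hmove_def]
proof (elim disjE exE conjE)
  fix a y assume u: "x @ [d] = a @ [0, 2] @ y" and w: "w = a @ [1, 0] @ y"
  show ?thesis
  proof (cases y rule: rev_exhaust)
    case (snoc y' e)
    then have "w = (a @ [1, 0] @ y') @ [d] \<and> hmove x (a @ [1, 0] @ y')"
      using u w by (auto simp: hmove_def)
    then show ?thesis by blast
  qed (use u w in auto)
next
  fix y assume u: "x @ [d] = 2 # y" and w: "w = [1, 0] @ y"
  show ?thesis
  proof (cases y rule: rev_exhaust)
    case (snoc y' e)
    then have "w = ([1, 0] @ y') @ [d] \<and> hmove x ([1, 0] @ y')"
      using u w by (auto simp: hmove_def)
    then show ?thesis by blast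
  qed (use u w in auto)
next
  fix a y assume u: "x @ [d] = a @ [1, 2] @ y" and w: "w = a @ [2, 0] @ y"
  show ?thesis
  proof (cases y rule: rev_exhaust)
    case (snoc y' e)
    then have "w = (a @ [2, 0] @ y') @ [d] \<and> hmove x (a @ [2, 0] @ y')"
      using u w by (auto simp: hmove_def)
    then show ?thesis by blast
  qed (use u w in auto)
qed

definition branching :: "nat list \<Rightarrow> bool" where
  "branching u \<longleftrightarrow> (\<exists>w1 w2. w1 \<noteq> w2 \<and> hmove u w1 \<and> hmove u w2)"

definition has_branching_expansion :: "nat \<Rightarrow> bool" where
  "has_branching_expansion n \<longleftrightarrow> (\<exists>u \<in> hyperbinary n. branching u)"

definition has_expansion_with_2 :: "nat \<Rightarrow> bool" where
  "has_expansion_with_2 n \<longleftrightarrow> (\<exists>u \<in> hyperbinary n. 2 \<in> set u)"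

lemma arcsA_eq: "arcsA n = {(u, w). u \<in> hyperbinary n \<and> hmove u w}"
  using hmove_hval hmove_hyperbinary_word by (auto simp: arcsA_def hyperbinary_eq)

lemma finite_arcsA: "finite (arcsA n)"
  by (rule finite_subset[of _ "hyperbinary n \<times> hyperbinary n"])
     (auto simp: arcsA_def finite_hyperbinary)

lemma fst_arcsA: "fst ` arcsA n = {u \<in> hyperbinary n. 2 \<in> set u}"
proof
  show "fst ` arcsA n \<subseteq> {u \<in> hyperbinary n. 2 \<in> set u}"
    using hmove_two_in_set by (auto simp: arcsA_eq)
  show "{u \<in> hyperbinary n. 2 \<in> set u} \<subseteq> fst ` arcsA n"
  proof clarify
    fix u assume u: "u \<in> hyperbinary n" "2 \<in> set u"
    then obtain w where "hmove u w"
      using hmove_exists by (auto simp: hyperbinary_eq hyperbinary_word_def)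
    with u(1) show "u \<in> fst ` arcsA n"
      by (auto simp: arcsA_eq image_iff)
  qed
qed

lemma b_eq_card_with_2: "b n = card {u \<in> hyperbinary n. 2 \<in> set u} + 1"
proof -
  obtain x where x: "x \<in> hyperbinary n" "2 \<notin> set x"
    using binary_expansion_exists by blast
  then have "hyperbinary n = insert x {u \<in> hyperbinary n. 2 \<in> set u}"
    using binary_expansion_unique by blast
  moreover have "finite {u \<in> hyperbinary n. 2 \<in> set u}" "x \<notin> {u \<in> hyperbinary n. 2 \<in> set u}"
    using finite_hyperbinary x(2) by auto
  ultimately show ?thesis
    unfolding b_def by (metis card_insert_disjoint Suc_eq_plus1)
qed

lemma inj_on_fst_arcsA_iff: "inj_on fst (arcsA n) \<longleftrightarrow> \<not> has_branching_expansion n"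
  by (auto simp: inj_on_def arcsA_eq has_branching_expansion_def branching_def)

lemma v_eq_0_iff: "v n = 0 \<longleftrightarrow> \<not> has_branching_expansion n"
proof -
  have "v n = int (card (arcsA n)) - int (card (fst ` arcsA n))"
    by (simp add: v_def b_eq_card_with_2 fst_arcsA)
  then have "v n = 0 \<longleftrightarrow> card (fst ` arcsA n) = card (arcsA n)"
    by linarith
  also have "\<dots> \<longleftrightarrow> inj_on fst (arcsA n)"
    using finite_arcsA card_image eq_card_imp_inj_on by metis
  finally show ?thesis
    by (simp add: inj_on_fst_arcsA_iff)
qed

lemma no_branching_if_no_2: "\<not> has_expansion_with_2 n \<Longrightarrow> \<not> has_branching_expansion n"
  using hmove_two_in_set
  by (auto simp: has_expansion_with_2_def has_branching_expansion_def branching_def)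

lemma branching_snocD:
  assumes "branching (x @ [d])"
  shows "branching x \<or> (d = 2 \<and> (\<exists>x' e. x = x' @ [e] \<and> e \<in> {0, 1} \<and> 2 \<in> set x'))"
proof -
  obtain w1 w2 where w: "w1 \<noteq> w2" "hmove (x @ [d]) w1" "hmove (x @ [d]) w2"
    using assms by (auto simp: branching_def)
  note m1 = hmove_snocD[OF w(2)] and m2 = hmove_snocD[OF w(3)]
  show ?thesis
  proof (cases "\<exists>w'. hmove x w'")
    case True
    then have "2 \<in> set x" by (auto dest: hmove_two_in_set)
    then show ?thesis
      using m1 m2 w(1) by (auto simp: branching_def)
  next
    case False
    then show ?thesis
      using m1 m2 w(1) by auto
  qed
qed

lemma no_expansion_with_2_pow2_minus_1: "\<not> has_expansion_with_2 (2 ^ j - 1)"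
proof (induction j)
  case 0
  then show ?case by (auto simp: has_expansion_with_2_def hyperbinary_0_iff)
next
  case (Suc j)
  show ?case
  proof
    assume "has_expansion_with_2 (2 ^ Suc j - 1)"
    then obtain u where u: "u \<in> hyperbinary (2 ^ Suc j - 1)" "2 \<in> set u"
      by (auto simp: has_expansion_with_2_def)
    have "(2::nat) ^ Suc j - 1 > 0"
      using one_less_power[of "2::nat" "Suc j"] by linarith
    then obtain x d where x: "u = x @ [d]" "d \<in> {0, 1, 2}" "x \<in> hyperbinary (hval x)"
      "2 ^ Suc j - 1 = 2 * hval x + d"
      using hyperbinary_snocE[OF u(1)] by blast
    define P :: nat where "P = 2 ^ j"
    have "P \<ge> 1" "2 * P - 1 = 2 * hval x + d"
      using x(4) by (simp_all add: P_def)
    with x(2) have "d = 1" "hval x = P - 1"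
      by auto presburger+
    then have "d = 1" "hval x = 2 ^ j - 1"
      by (simp_all add: P_def)
    with u(2) x(1,3) have "has_expansion_with_2 (2 ^ j - 1)"
      by (auto simp: has_expansion_with_2_def)
    with Suc.IH show False ..
  qed
qed

lemma pow2_if_no_expansion_with_2: "\<not> has_expansion_with_2 k \<Longrightarrow> \<exists>j. k + 1 = 2 ^ j"
proof (induction k rule: less_induct)
  case (less k)
  have "k = 0 \<or> (\<exists>m. k = 2 * m + 2) \<or> (\<exists>m. k = 2 * m + 1)"
    by presburger
  then consider "k = 0" | m where "k = 2 * m + 2" | m where "k = 2 * m + 1"
    by blast
  then show ?case
  proof cases
    case 1
    then show ?thesis by (intro exI[of _ 0]) simp
  next
    case (2 m)
    obtain x where "x \<in> hyperbinary m"
      using binary_expansion_exists by blast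
    then have "x @ [2] \<in> hyperbinary k"
      using snoc_in_hyperbinary[of x m 2] 2 by simp
    then have "has_expansion_with_2 k"
      unfolding has_expansion_with_2_def by (intro bexI[of _ "x @ [2]"]) auto
    with less.prems show ?thesis ..
  next
    case (3 m)
    have "\<not> has_expansion_with_2 m"
    proof
      assume "has_expansion_with_2 m"
      then obtain y where "y \<in> hyperbinary m" "2 \<in> set y"
        by (auto simp: has_expansion_with_2_def)
      then have "y @ [1] \<in> hyperbinary k" "2 \<in> set (y @ [1])"
        using snoc_in_hyperbinary[of y m 1] 3 by auto
      then show False
        using less.prems by (auto simp: has_expansion_with_2_def)
    qed
    then obtain j where "m + 1 = 2 ^ j"
      using less.IH[of m] 3 by auto
    with 3 have "k + 1 = 2 ^ Suc j" by simp
    then show ?thesis ..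
  qed
qed

text \<open>If y contains a 2, then y @ [r, 2] has two arcs: one from an arc of y, and the
one rewriting its last two digits.\<close>
lemma branching_expansion_if_expansion_with_2:
  assumes "has_expansion_with_2 k" "r < 2"
  shows "has_branching_expansion (4 * k + 2 * r + 2)"
proof -
  obtain y where y: "y \<in> hyperbinary k" "2 \<in> set y"
    using assms(1) by (auto simp: has_expansion_with_2_def)
  have "y @ [r] \<in> hyperbinary (2 * k + r)"
    by (rule snoc_in_hyperbinary[OF y(1)]) (use y(2) assms(2) in auto)
  then have u: "y @ [r, 2] \<in> hyperbinary (4 * k + 2 * r + 2)"
    using snoc_in_hyperbinary[of "y @ [r]" "2 * k + r" 2] by simp
  obtain w where "hmove y w"
    using hmove_exists y by (auto simp: hyperbinary_eq hyperbinary_word_def)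
  then have lifted: "hmove (y @ [r, 2]) (w @ [r, 2])"
    using hmove_snoc[of "y @ [r]" "w @ [r]" 2] hmove_snoc[of y w r] by simp
  have rewritten: "hmove (y @ [r, 2]) (y @ [r + 1, 0])"
  proof -
    have "r = 0 \<or> r = 1" using assms(2) by auto
    then show ?thesis
      using hmove_02_end[of y] hmove_12_end[of y] by (elim disjE) (simp_all add: numeral_2_eq_2)
  qed
  have "w @ [r, 2] \<noteq> y @ [r + 1, 0]"
    by (metis last_snoc append_Cons append_Nil append_assoc zero_neq_numeral)
  with lifted rewritten have "branching (y @ [r, 2])"
    unfolding branching_def by blast
  with u show ?thesis
    unfolding has_branching_expansion_def by blast
qed

lemma no_branching_expansion_double:
  assumes "\<not> has_branching_expansion m" "\<not> has_branching_expansion (m - 1)"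
    and "\<not> has_expansion_with_2 ((m - 1) div 2)"
  shows "\<not> has_branching_expansion (2 * m)"
proof
  assume "has_branching_expansion (2 * m)"
  then obtain u where u: "u \<in> hyperbinary (2 * m)" "branching u"
    by (auto simp: has_branching_expansion_def)
  have "u \<noteq> []"
    using u(2) by (auto simp: branching_def hmove_def)
  then have "2 * m > 0"
    using u(1) hyperbinary_0_iff by (cases m) auto
  then obtain x d where x: "u = x @ [d]" "d \<in> {0, 1, 2}" "x \<in> hyperbinary (hval x)"
    "2 * m = 2 * hval x + d"
    using hyperbinary_snocE[OF u(1)] by blast
  then have "d = 0 \<and> hval x = m \<or> d = 2 \<and> hval x = m - 1"
    by auto presburger+
  moreover have "branching x \<or> (d = 2 \<and> (\<exists>x' e. x = x' @ [e] \<and> e \<in> {0, 1} \<and> 2 \<in> set x'))"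
    using branching_snocD u(2) x(1) by blast
  ultimately show False
  proof (elim disjE conjE exE)
    fix x' e
    assume "hval x = m - 1" "x = x' @ [e]" "e \<in> {0, 1}" "2 \<in> set x'"
    moreover from x(3) \<open>x = x' @ [e]\<close> have "x' \<in> hyperbinary (hval x')"
      by (simp add: hyperbinary_eq hyperbinary_word_snoc)
    moreover have "hval x' = (m - 1) div 2"
      using \<open>hval x = m - 1\<close> \<open>x = x' @ [e]\<close> \<open>e \<in> {0, 1}\<close> by auto
    ultimately have "has_expansion_with_2 ((m - 1) div 2)"
      unfolding has_expansion_with_2_def by metis
    with assms(3) show False ..
  qed (use assms(1,2) x(3) in \<open>auto simp: has_branching_expansion_def\<close>)
qed

lemma pow2_if_no_branching_expansion:
  assumes "even n" "\<not> has_branching_expansion n"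
  shows "\<exists>t::nat. t > 0 \<and> (n = 2 ^ t - 2 \<or> n = 2 ^ t)"
proof (cases "n = 0")
  case True
  then show ?thesis by (intro exI[of _ 1]) simp
next
  case False
  with assms(1) have "\<exists>k r. n = 4 * k + 2 * r + 2 \<and> r < (2::nat)"
    by presburger
  then obtain k r where n: "n = 4 * k + 2 * r + 2" "r < 2"
    by blast
  have "\<not> has_expansion_with_2 k"
    using branching_expansion_if_expansion_with_2 n assms(2) by blast
  then obtain j where "k + 1 = 2 ^ j"
    using pow2_if_no_expansion_with_2 by blast
  then have "4 * k + 4 = 2 ^ (j + 2)"
    by simp
  with n have "n = 2 ^ (j + 2) - 2 \<or> n = 2 ^ (j + 2)"
    by arith
  then show ?thesis
    by (intro exI[of _ "j + 2"]) simp
qed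

lemma no_branching_expansion_pow2:
  "\<not> has_branching_expansion (2 ^ t - 2) \<and> \<not> has_branching_expansion (2 ^ t)"
proof (induction t)
  case 0
  show ?case
    using no_branching_if_no_2 no_expansion_with_2_pow2_minus_1[of 0]
      no_expansion_with_2_pow2_minus_1[of 1] by simp
next
  case (Suc t)
  have no_2: "\<not> has_branching_expansion (2 ^ t - 1)" "\<not> has_expansion_with_2 (2 ^ (t - 1) - 1)"
    using no_branching_if_no_2 no_expansion_with_2_pow2_minus_1 by blast+
  have "(2 ^ t - 1 - 1) div 2 = 2 ^ (t - 1) - (1::nat)" "(2 ^ t - 1) div 2 = 2 ^ (t - 1) - (1::nat)"
    by (cases t; simp)+
  with no_2 have "\<not> has_expansion_with_2 ((2 ^ t - 1 - 1) div 2)"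
    "\<not> has_expansion_with_2 ((2 ^ t - 1) div 2)"
    by simp_all
  moreover have "\<not> has_branching_expansion (2 ^ t - 1 - 1)"
    using Suc.IH by (simp add: diff_diff_add numeral_2_eq_2)
  ultimately have "\<not> has_branching_expansion (2 * (2 ^ t - 1))"
    "\<not> has_branching_expansion (2 * 2 ^ t)"
    using no_branching_expansion_double no_2(1) Suc.IH by blast+
  moreover have "2 * (2 ^ t - 1) = 2 ^ Suc t - (2::nat)"
    by simp
  ultimately show ?case
    by simp
qed

theorem mainTheorem2:
  fixes n :: nat
  assumes "even n"
  shows "v n = 0 \<longleftrightarrow> (\<exists>t::nat. t > 0 \<and> (n = 2 ^ t - 2 \<or> n = 2 ^ t))"
proof -
  have "v n = 0 \<longleftrightarrow> \<not> has_branching_expansion n"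
    by (rule v_eq_0_iff)
  also have "\<dots> \<longleftrightarrow> (\<exists>t::nat. t > 0 \<and> (n = 2 ^ t - 2 \<or> n = 2 ^ t))"
    using pow2_if_no_branching_expansion[OF assms] no_branching_expansion_pow2 by blast
  finally show ?thesis .
qed

end
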